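(* Let $F$ be an infinite field, $n\ge3$, and let $z_1,\dots,z_k$ be distinct variables of degrees $g_1,\dots,g_k\in\{1,\dots,n-1\}$ with $g_1+\dots+g_k\le n-1$, and $y_1,y_2,\dots$ distinct variables of degree $0$. Then the commutators $$[z_1,y_1,\dots,y_{t_1},z_2,y_{t_1+1},\dots,y_{t_1+t_2},z_3,\dots,z_k,y_{t_1+\dots+t_{k-1}+1},\dots,y_{t_1+\dots+t_k}]$$ ($t_1,\dots,t_k\ge0$) are linearly independent modulo the $T_{\mathbb{Z}_n}$-ideal $I$ of graded identities of $UT_n(F)^{(-)}$.
   Context: $UT_n(F)^{(-)}$: $n\times n$ upper triangular matrices with bracket $[a,b]=ab-ba$ and canonical $\mathbb{Z}_n$-grading (degree-$k$ component spanned by $e_{ij}$, $j-i=k$); elements of $\mathbb{Z}_n\setminus\{0\}$ are identified with $1,\dots,n-1$. $I$ is the set of polynomials in the free $\mathbb{Z}_n$-graded Lie algebra vanishing on $UT_n(F)^{(-)}$ under degree-respecting substitutions. Commutators are left normed. *)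

theory Defs
  imports "Jordan_Normal_Form.Matrix"
begin

definition lie_br :: "'a::field mat \<Rightarrow> 'a mat \<Rightarrow> 'a mat" where
  "lie_br A B = A * B - B * A"

fun lnc :: "'a::field mat list \<Rightarrow> 'a mat" where
  "lnc [] = undefined"
| "lnc (a # as) = foldl lie_br a as"

(* homogeneous component of degree d (0 \<le> d \<le> n-1) of the canonical Z_n-grading
   of UT_n(F): span of e_ij with j - i = d *)
definition ut_comp :: "nat \<Rightarrow> nat \<Rightarrow> 'a::field mat set" where
  "ut_comp n d = {A \<in> carrier_mat n n. \<forall>i<n. \<forall>j<n. A $$ (i,j) \<noteq> 0 \<longrightarrow> j = i + d}"

(* the sequence z_1, y_1..y_{t_1}, z_2, y_{t_1+1}, ..., z_k, ..., y_{t_1+...+t_k}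
   after substituting z_{i+1} := Z i and y_{j+1} := Y j (0-based indices) *)
definition word :: "(nat \<Rightarrow> 'a mat) \<Rightarrow> (nat \<Rightarrow> 'a mat) \<Rightarrow> nat list \<Rightarrow> 'a mat list" where
  "word Z Y t = concat (map (\<lambda>i. Z i # map Y [sum_list (take i t) ..< sum_list (take (Suc i) t)])
                            [0..<length t])"

end

theory Submission
  imports Defs
begin

text \<open>
  Put \<open>p\<^sub>i = g\<^sub>1 + \<dots> + g\<^sub>i\<close> and substitute the matrix unit \<open>e(p\<^sub>i\<^sub>-\<^sub>1, p\<^sub>i)\<close> for \<open>z\<^sub>i\<close> and a diagonal
  matrix \<open>diag(d\<^sub>j)\<close> for \<open>y\<^sub>j\<close>. The commutator with block lengths \<open>t\<close> then becomes
  \<open>\<gamma>(t) e(0, p\<^sub>k)\<close>, where \<open>\<gamma>(t)\<close> is the product of \<open>d\<^sub>j(p\<^sub>i) - d\<^sub>j(0)\<close> over all \<open>y\<^sub>j\<close>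
  in the \<open>i\<close>-th block of \<open>t\<close>. For a fixed \<open>t\<^sub>0\<close>, let \<open>d\<^sub>j\<close> be the indicator of \<open>p\<^sub>i\<close>,
  where \<open>i\<close> is the block of \<open>t\<^sub>0\<close> containing \<open>j\<close>. Then \<open>\<gamma>(t\<^sub>0) = 1\<close>, and \<open>\<gamma>(t) \<noteq> 0\<close>
  forces every block of \<open>t\<close> into the corresponding block of \<open>t\<^sub>0\<close>, so \<open>t \<le> t\<^sub>0\<close>
  componentwise. The resulting linear system is triangular with respect to the total
  length \<open>t\<^sub>1 + \<dots> + t\<^sub>k\<close>, hence only has the trivial solution. Only the values 0 and 1
  are substituted.
\<close>

definition mat_unit :: "nat \<Rightarrow> nat \<Rightarrow> nat \<Rightarrow> 'a::zero \<Rightarrow> 'a mat" where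
  "mat_unit n a b \<alpha> = mat n n (\<lambda>(i,j). if i = a \<and> j = b then \<alpha> else 0)"

lemma mat_unit_carrier [simp]: "mat_unit n a b \<alpha> \<in> carrier_mat n n"
  by (simp add: mat_unit_def)

lemma mat_unit_dim [simp]: "dim_row (mat_unit n a b \<alpha>) = n" "dim_col (mat_unit n a b \<alpha>) = n"
  by (simp_all add: mat_unit_def)

lemma mat_unit_index [simp]:
  "i < n \<Longrightarrow> j < n \<Longrightarrow> mat_unit n a b \<alpha> $$ (i,j) = (if i = a \<and> j = b then \<alpha> else 0)"
  by (simp add: mat_unit_def)

lemma mat_unit_mult_index:
  fixes B :: "'a::semiring_0 mat"
  assumes "B \<in> carrier_mat n n" "i < n" "j < n" "b < n"
  shows "(mat_unit n a b \<alpha> * B) $$ (i,j) = (if i = a then \<alpha> * B $$ (b,j) else 0)"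
  using assms by (auto simp: scalar_prod_def if_distrib[of "\<lambda>x. x * _"] cong: if_cong)

lemma mult_mat_unit_index:
  fixes B :: "'a::semiring_0 mat"
  assumes "B \<in> carrier_mat n n" "i < n" "j < n" "a < n"
  shows "(B * mat_unit n a b \<alpha>) $$ (i,j) = (if j = b then B $$ (i,a) * \<alpha> else 0)"
  using assms by (auto simp: scalar_prod_def if_distrib[of "\<lambda>x. _ * x"] cong: if_cong)

lemma lie_br_index:
  assumes "A \<in> carrier_mat n n" "B \<in> carrier_mat n n" "i < n" "j < n"
  shows "lie_br A B $$ (i,j) = (A * B) $$ (i,j) - (B * A) $$ (i,j)"
  using assms by (simp add: lie_br_def)

lemma lie_br_carrier:
  "A \<in> carrier_mat n n \<Longrightarrow> B \<in> carrier_mat n n \<Longrightarrow> lie_br A B \<in> carrier_mat n n"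
  unfolding lie_br_def by (intro minus_carrier_mat mult_carrier_mat)

lemma lie_br_mat_unit_mat_unit:
  assumes "a < n" "b < n" "c < n" "a \<noteq> c"
  shows "lie_br (mat_unit n a b \<alpha>) (mat_unit n b c \<beta>) = mat_unit n a c (\<alpha> * \<beta>)"
  using assms
  by (intro eq_matI)
    (auto simp: lie_br_index[of _ n] mat_unit_mult_index carrier_matD[OF lie_br_carrier] simp del: index_mult_mat)

lemma lie_br_mat_unit_mat_diag:
  assumes "a < n" "b < n"
  shows "lie_br (mat_unit n a b \<alpha>) (mat_diag n f) = mat_unit n a b (\<alpha> * (f b - f a))"
  using assms
  by (intro eq_matI)
    (auto simp: lie_br_index[of _ n] mat_unit_mult_index mult_mat_unit_index carrier_matD[OF lie_br_carrier]
      mat_diag_def algebra_simps simp del: index_mult_mat)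

lemma foldl_lie_br_mat_diag:
  assumes "a < n" "b < n"
  shows "foldl lie_br (mat_unit n a b \<alpha>) (map (\<lambda>j. mat_diag n (D j)) js)
       = mat_unit n a b (\<alpha> * (\<Prod>j\<leftarrow>js. D j b - D j a))"
  using assms
  by (induction js arbitrary: \<alpha>) (simp_all add: lie_br_mat_unit_mat_diag mult.assoc)

definition psum :: "nat list \<Rightarrow> nat \<Rightarrow> nat" where
  "psum xs r = sum_list (take r xs)"

lemma psum_0 [simp]: "psum xs 0 = 0"
  by (simp add: psum_def)

lemma psum_Suc: "r < length xs \<Longrightarrow> psum xs (Suc r) = psum xs r + xs ! r"
  by (simp add: psum_def take_Suc_conv_app_nth)

lemma psum_length [simp]: "psum xs (length xs) = sum_list xs"
  by (simp add: psum_def)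

lemma psum_le_sum_list: "psum xs r \<le> sum_list xs"
  by (metis append_take_drop_id le_add1 psum_def sum_list_append)

lemma psum_strict_mono:
  assumes "\<forall>x\<in>set xs. 0 < x" "r < s" "s \<le> length xs"
  shows "psum xs r < psum xs s"
  using assms(2,3)
proof (induction s)
  case (Suc s)
  then have "psum xs r \<le> psum xs s" and "0 < xs ! s"
    using assms(1) by (auto simp: less_Suc_eq)
  with Suc.prems show ?case
    by (simp add: psum_Suc)
qed simp

lemma psum_Suc_inj:
  assumes "\<forall>x\<in>set xs. 0 < x" "i < length xs" "r < length xs" "psum xs (Suc i) = psum xs (Suc r)"
  shows "i = r"
proof (rule ccontr)
  assume "i \<noteq> r"
  then consider "i < r" | "r < i" by linarith
  then show False
    using psum_strict_mono[OF assms(1), of "Suc i" "Suc r"] psum_strict_mono[OF assms(1), of "Suc r" "Suc i"]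
      assms(2-4) by cases auto
qed

definition block :: "nat list \<Rightarrow> nat \<Rightarrow> nat set" where
  "block t i = {psum t i..<psum t (Suc i)}"

lemma card_block: "i < length t \<Longrightarrow> card (block t i) = t ! i"
  by (simp add: block_def psum_Suc)

lemma word_eq_blocks:
  "word Z Y t = concat (map (\<lambda>i. Z i # map Y [psum t i..<psum t (Suc i)]) [0..<length t])"
  by (simp add: word_def psum_def)

lemma sum_list_less_of_nth_le:
  fixes t t0 :: "nat list"
  assumes len: "length t = length t0" and le: "\<forall>i<length t. t ! i \<le> t0 ! i" and "t \<noteq> t0"
  shows "sum_list t < sum_list t0"
proof -
  have sums: "sum_list t = (\<Sum>i<length t. t ! i)" "sum_list t0 = (\<Sum>i<length t. t0 ! i)"
    using len by (simp_all add: sum_list_sum_nth atLeast0LessThan)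
  have "(\<Sum>i<length t. t ! i) \<le> (\<Sum>i<length t. t0 ! i)"
    using le by (intro sum_mono) simp
  moreover have "(\<Sum>i<length t. t ! i) \<noteq> (\<Sum>i<length t. t0 ! i)"
  proof
    assume eq: "(\<Sum>i<length t. t ! i) = (\<Sum>i<length t. t0 ! i)"
    have "t ! i = t0 ! i" if "i < length t" for i
      by (rule sum_mono_inv[OF eq]) (use le that in auto)
    with len have "t = t0"
      by (intro nth_equalityI) auto
    with \<open>t \<noteq> t0\<close> show False ..
  qed
  ultimately show ?thesis
    unfolding sums by linarith
qed

lemma triangular_system_trivial:
  fixes c :: "'b \<Rightarrow> 'a::field" and w :: "'b \<Rightarrow> nat"
  assumes "finite S"
    and sum: "\<And>s. s \<in> S \<Longrightarrow> (\<Sum>t\<in>S. c t * P s t) = 0"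
    and diag: "\<And>s. s \<in> S \<Longrightarrow> P s s \<noteq> 0"
    and lower: "\<And>s t. s \<in> S \<Longrightarrow> t \<in> S \<Longrightarrow> t \<noteq> s \<Longrightarrow> P s t \<noteq> 0 \<Longrightarrow> w t < w s"
  shows "\<forall>s\<in>S. c s = 0"
proof -
  have "c s = 0" if "s \<in> S" "w s = m" for s m
    using that
  proof (induction m arbitrary: s rule: less_induct)
    case (less m)
    have "c t * P s t = 0" if "t \<in> S - {s}" for t
      using less.IH[of "w t" t] lower[of s t] less.prems that by auto
    then have "(\<Sum>t\<in>S. c t * P s t) = c s * P s s"
      using \<open>finite S\<close> less.prems(1) by (simp add: sum.remove[of S s] sum.neutral)
    with sum[OF less.prems(1)] diag[OF less.prems(1)] show "c s = 0"
      by simp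
  qed
  then show ?thesis
    by blast
qed

definition chain_unit :: "nat \<Rightarrow> nat list \<Rightarrow> nat \<Rightarrow> 'a::zero_neq_one mat" where
  "chain_unit n g i = mat_unit n (psum g i) (psum g (Suc i)) 1"

definition word_coeff :: "nat list \<Rightarrow> nat list \<Rightarrow> (nat \<Rightarrow> nat \<Rightarrow> 'a::field) \<Rightarrow> 'a" where
  "word_coeff g t D = (\<Prod>i<length g. \<Prod>j\<in>block t i. D j (psum g (Suc i)) - D j 0)"

lemma foldl_lie_br_chain_blocks:
  assumes "\<forall>x\<in>set g. 0 < x" "sum_list g < n" "r \<le> length g"
  shows "foldl lie_br (mat_unit n 0 0 1)
           (concat (map (\<lambda>i. chain_unit n g i # map (\<lambda>j. mat_diag n (D j)) [psum t i..<psum t (Suc i)])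
              [0..<r]))
       = mat_unit n 0 (psum g r)
           (\<Prod>i<r. \<Prod>j\<in>block t i. D j (psum g (Suc i)) - D j 0)"
  using assms(3)
proof (induction r)
  case (Suc r)
  have "psum g r < n" "psum g (Suc r) < n"
    using psum_le_sum_list[of g] assms(2) by (auto intro: le_less_trans)
  moreover have "psum g (Suc r) \<noteq> 0"
    using psum_strict_mono[OF assms(1), of 0 "Suc r"] Suc.prems by simp
  ultimately show ?case
    using Suc by (simp add: chain_unit_def lie_br_mat_unit_mat_unit foldl_lie_br_mat_diag block_def
        prod.distinct_set_conv_list[symmetric] mult.commute)
qed simp

lemma lnc_word_chain_unit:
  assumes "\<forall>x\<in>set g. 0 < x" "sum_list g < n" "g \<noteq> []" "length t = length g"
  shows "lnc (word (chain_unit n g) (\<lambda>j. mat_diag n (D j)) t) = mat_unit n 0 (sum_list g) (word_coeff g t D)"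
proof -
  let ?blocks = "\<lambda>i. chain_unit n g i # map (\<lambda>j. mat_diag n (D j)) [psum t i..<psum t (Suc i)]"
  have word: "word (chain_unit n g) (\<lambda>j. mat_diag n (D j)) t = concat (map ?blocks [0..<length g])"
    using assms(4) by (simp add: word_eq_blocks)
  then obtain rest where rest: "word (chain_unit n g) (\<lambda>j. mat_diag n (D j)) t = chain_unit n g 0 # rest"
    using assms(3) by (cases g) (auto simp: upt_rec)
  \<comment> \<open>Since the first chain unit is \<open>e(0, p)\<close> with \<open>p > 0\<close>, bracketing \<open>e(0, 0)\<close> with it returns it unchanged.\<close>
  have "lie_br (mat_unit n 0 0 1) (chain_unit n g 0) = (chain_unit n g 0 :: 'a mat)"
    using psum_strict_mono[OF assms(1), of 0 1] psum_le_sum_list[of g 1] assms(2,3)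
      lie_br_mat_unit_mat_unit[of 0 n 0 "psum g 1" "1::'a" 1]
    by (simp add: chain_unit_def Suc_le_eq)
  then have "lnc (word (chain_unit n g) (\<lambda>j. mat_diag n (D j)) t)
      = foldl lie_br (mat_unit n 0 0 1) (concat (map ?blocks [0..<length g]))"
    using rest word by simp
  also have "\<dots> = mat_unit n 0 (sum_list g) (word_coeff g t D)"
    using foldl_lie_br_chain_blocks[OF assms(1,2) order_refl] by (simp add: word_coeff_def)
  finally show ?thesis .
qed

definition probe :: "nat list \<Rightarrow> nat list \<Rightarrow> nat \<Rightarrow> nat \<Rightarrow> 'a::zero_neq_one" where
  "probe g t0 j a = (if \<exists>r<length g. j \<in> block t0 r \<and> a = psum g (Suc r) then 1 else 0)"

lemma probe_at_0:
  assumes "\<forall>x\<in>set g. 0 < x"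
  shows "probe g t0 j 0 = 0"
  using psum_strict_mono[OF assms, of 0] by (fastforce simp: probe_def)

lemma word_coeff_probe_self:
  assumes "\<forall>x\<in>set g. 0 < x"
  shows "word_coeff g t0 (probe g t0) = (1::'a::field)"
proof -
  have "probe g t0 j (psum g (Suc i)) = (1::'a)" if "i < length g" "j \<in> block t0 i" for i j
    using that by (auto simp: probe_def)
  then show ?thesis
    by (simp add: word_coeff_def probe_at_0[OF assms])
qed

lemma block_subset_of_word_coeff_probe:
  assumes "\<forall>x\<in>set g. 0 < x" "word_coeff g t (probe g t0) \<noteq> (0::'a::field)" "i < length g"
  shows "block t i \<subseteq> block t0 i"
proof
  fix j assume j: "j \<in> block t i"
  have "probe g t0 j (psum g (Suc i)) \<noteq> (0::'a)"
    using assms j by (auto simp: word_coeff_def probe_at_0 block_def)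
  then obtain r where "r < length g" "j \<in> block t0 r" "psum g (Suc i) = psum g (Suc r)"
    by (auto simp: probe_def split: if_splits)
  with psum_Suc_inj[OF assms(1,3)] show "j \<in> block t0 i"
    by blast
qed

lemma chain_unit_ut_comp: "i < length g \<Longrightarrow> chain_unit n g i \<in> ut_comp n (g ! i)"
  by (auto simp: chain_unit_def ut_comp_def psum_Suc)

lemma mat_diag_ut_comp: "mat_diag n f \<in> ut_comp n 0"
  by (auto simp: mat_diag_def ut_comp_def)

lemma nth_le_of_word_coeff_probe:
  assumes "\<forall>x\<in>set g. 0 < x" "word_coeff g t (probe g t0) \<noteq> (0::'a::field)"
    and "length t = length g" "length t0 = length g" "i < length g"
  shows "t ! i \<le> t0 ! i"
proof -
  have "card (block t i) \<le> card (block t0 i)"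
    using block_subset_of_word_coeff_probe[OF assms(1,2,5)] by (intro card_mono) (simp_all add: block_def)
  with assms(3-5) show ?thesis
    by (simp add: card_block)
qed

theorem mainTheorem15:
  fixes n k :: nat and g :: "nat list"
    and S :: "nat list set" and c :: "nat list \<Rightarrow> 'a::field"
  assumes "infinite (UNIV :: 'a set)"
    and "n \<ge> 3"
    and "k \<ge> 1" and "length g = k"
    and "\<forall>i<k. 1 \<le> g ! i \<and> g ! i \<le> n - 1"
    and "sum_list g \<le> n - 1"
    and "finite S" and "\<forall>t\<in>S. length t = k"
    and "\<forall>(Z :: nat \<Rightarrow> 'a mat) (Y :: nat \<Rightarrow> 'a mat).
           (\<forall>i<k. Z i \<in> ut_comp n (g ! i)) \<longrightarrow> (\<forall>j. Y j \<in> ut_comp n 0) \<longrightarrow>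
           (\<forall>a<n. \<forall>b<n. (\<Sum>t\<in>S. c t * lnc (word Z Y t) $$ (a, b)) = 0)"
  shows "\<forall>t\<in>S. c t = 0"
proof -
  have g_pos: "\<forall>x\<in>set g. 0 < x"
    using assms(4,5) by (fastforce simp: in_set_conv_nth)
  have g_small: "sum_list g < n" and "g \<noteq> []"
    using assms(2-4,6) by auto
  show ?thesis
  proof (rule triangular_system_trivial[where P = "\<lambda>s t. word_coeff g t (probe g s)" and w = sum_list])
    fix s assume "s \<in> S"
    let ?Y = "\<lambda>j. mat_diag n (probe g s j) :: 'a mat"
    have "(\<Sum>t\<in>S. c t * lnc (word (chain_unit n g) ?Y t) $$ (0, sum_list g)) = 0"
      using assms(9)[rule_format, of "chain_unit n g" ?Y 0 "sum_list g"] g_small assms(4)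
      by (simp add: chain_unit_ut_comp mat_diag_ut_comp)
    moreover have "lnc (word (chain_unit n g) ?Y t) $$ (0, sum_list g) = word_coeff g t (probe g s)"
      if "t \<in> S" for t
      using that assms(4,8) g_small by (simp add: lnc_word_chain_unit[OF g_pos g_small \<open>g \<noteq> []\<close>])
    ultimately show "(\<Sum>t\<in>S. c t * word_coeff g t (probe g s)) = 0"
      by simp
  next
    show "word_coeff g s (probe g s) \<noteq> (0::'a)" for s
      by (simp add: word_coeff_probe_self[OF g_pos])
  next
    fix s t assume "s \<in> S" "t \<in> S" "t \<noteq> s" "word_coeff g t (probe g s) \<noteq> (0::'a)"
    then show "sum_list t < sum_list s"
      using nth_le_of_word_coeff_probe[OF g_pos] sum_list_less_of_nth_le assms(4,8) by metis
  qed (rule assms(7))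
qed

end
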